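(* Let $y_{1:n}$ be data, $\mathcal{C}$ a real-valued cost function on contiguous segments $y_{(a+1):b}$, $\beta>0$ a constant, and $f$ a concave differentiable real function (on an interval containing $\{0,1,\ldots,n-1\}$) with derivative $f'$. For a segmentation with $m$ changepoints $0=\tau_0<\tau_1<\cdots<\tau_m<\tau_{m+1}=n$ consider the criterion $$\beta f(m)+\sum_{i=1}^{m+1}\mathcal{C}(y_{(\tau_{i-1}+1):\tau_i}),$$ and let $\hat m$ be the value of $m$ for which this criterion is minimised (over all $m$ and changepoint positions). Then the optimal segmentation under this criterion is a segmentation that minimises, over all $m$ and changepoint positions, $$m\,\beta f'(\hat m)+\sum_{i=1}^{m+1}\mathcal{C}(y_{(\tau_{i-1}+1):\tau_i}).$$
   Context: Segments are $y_{(\tau_{i-1}+1):\tau_i}=(y_{\tau_{i-1}+1},\ldots,y_{\tau_i})$; changepoints are integers in $\{1,\ldots,n-1\}$. *)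

theory Defs
  imports "HOL-Analysis.Analysis"
begin

text \<open>A segmentation of y_{1:n} is given by its list of changepoints
  tau_1 < ... < tau_m, each in {1,...,n-1}; tau_0 = 0 and tau_{m+1} = n.\<close>
definition valid_cps :: "nat \<Rightarrow> nat list \<Rightarrow> bool" where
  "valid_cps n taus \<longleftrightarrow> sorted_wrt (<) taus \<and> set taus \<subseteq> {1..n-1}"

definition segment :: "(nat \<Rightarrow> 'a) \<Rightarrow> nat \<Rightarrow> nat \<Rightarrow> 'a list" where
  "segment y a b = map y [a+1..<b+1]"

definition seg_cost :: "('a list \<Rightarrow> real) \<Rightarrow> (nat \<Rightarrow> 'a) \<Rightarrow> nat \<Rightarrow> nat list \<Rightarrow> real" where
  "seg_cost C y n taus =
     (let bs = 0 # taus @ [n] in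
      \<Sum>i = 1..length taus + 1. C (segment y (bs ! (i-1)) (bs ! i)))"

definition pen_crit :: "real \<Rightarrow> (real \<Rightarrow> real) \<Rightarrow> ('a list \<Rightarrow> real) \<Rightarrow> (nat \<Rightarrow> 'a) \<Rightarrow> nat \<Rightarrow> nat list \<Rightarrow> real" where
  "pen_crit \<beta> f C y n taus = \<beta> * f (real (length taus)) + seg_cost C y n taus"

end

theory Submission
  imports Defs
begin

text \<open>Let \<open>M\<close> be the optimal number of changepoints. By concavity \<open>f\<close> lies below its
  tangent at \<open>M\<close>, so \<open>\<beta> f m \<le> \<beta> f M + (m - M) \<beta> f'(M)\<close>. Substituting this into the
  optimality of the chosen segmentation for the penalised criterion and cancelling \<open>\<beta> f M\<close>
  shows that it is also optimal for the linear penalty \<open>m \<beta> f'(M)\<close>.\<close>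

text \<open>Unlike the library's \<open>convex_on_imp_above_tangent\<close>, the point of tangency may lie on
  the boundary of \<open>A\<close>: only the one-sided slopes along the segment from \<open>c\<close> to \<open>x\<close> are used.\<close>
lemma concave_on_le_tangent:
  fixes f :: "real \<Rightarrow> real"
  assumes concave: "concave_on A f" and c: "c \<in> A" and x: "x \<in> A"
    and deriv: "(f has_field_derivative f') (at c within A)"
  shows "f x \<le> f c + f' * (x - c)"
proof -
  define g where "g = (\<lambda>t. f (c + t * (x - c)))"
  have on_segment: "c + t * (x - c) \<in> A" if "t \<in> {0..1}" for t
    using convexD[OF concave_on_imp_convex[OF concave] c x, of "1 - t" t] that
    by (simp add: algebra_simps)
  have inner: "((\<lambda>t. c + t * (x - c)) has_field_derivative x - c) (at 0 within {0..1})"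
    by (auto intro!: derivative_eq_intros)
  have outer: "(f has_field_derivative f') (at c within (\<lambda>t. c + t * (x - c)) ` {0..1})"
    using deriv on_segment by (auto intro: has_field_derivative_subset)
  have "(g has_field_derivative f' * (x - c)) (at 0 within {0..1})"
    using DERIV_image_chain[of f f' "\<lambda>t. c + t * (x - c)" 0, OF _ inner] outer
    by (simp add: g_def comp_def)
  hence "(g has_field_derivative f' * (x - c)) (at 0 within {0<..1})"
    by (rule has_field_derivative_subset) auto
  hence slope_lim: "((\<lambda>t. (g t - g 0) / t) \<longlongrightarrow> f' * (x - c)) (at 0 within {0<..1})"
    by (simp add: has_field_derivative_iff)
  have "\<forall>\<^sub>F t in at 0 within {0<..1}. f x - f c \<le> (g t - g 0) / t"
    unfolding eventually_at_filter
  proof (intro always_eventually allI impI)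
    fix t :: real assume "t \<in> {0<..1}"
    moreover from this have "(1 - t) * f c + t * f x \<le> g t"
      using concave_onD[OF concave, of t c x] c x by (simp add: g_def algebra_simps)
    ultimately show "f x - f c \<le> (g t - g 0) / t"
      by (simp add: g_def field_simps)
  qed
  moreover have "at 0 within {0<..1::real} \<noteq> bot"
    by (simp add: at_within_eq_bot_iff)
  ultimately have "f x - f c \<le> f' * (x - c)"
    using slope_lim by (simp add: tendsto_lowerbound)
  thus ?thesis by simp
qed

lemma valid_cps_length_le: "valid_cps n taus \<Longrightarrow> length taus \<le> n - 1"
proof -
  assume valid: "valid_cps n taus"
  hence "length taus = card (set taus)"
    unfolding valid_cps_def by (simp add: distinct_card strict_sorted_iff)
  also have "\<dots> \<le> card {1..n-1}"
    using valid unfolding valid_cps_def by (intro card_mono) auto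
  finally show ?thesis by simp
qed

theorem theorem3:
  fixes y :: "nat \<Rightarrow> 'a" and C :: "'a list \<Rightarrow> real" and n :: nat
    and \<beta> :: real and f f' :: "real \<Rightarrow> real" and I :: "real set"
    and taus_hat :: "nat list"
  assumes "n \<ge> 1"
    and "\<beta> > 0"
    and "is_interval I" and "real ` {0..n-1} \<subseteq> I"
    and "concave_on I f"
    and "\<And>x. x \<in> I \<Longrightarrow> (f has_real_derivative f' x) (at x within I)"
    and "valid_cps n taus_hat"
    and "\<And>taus. valid_cps n taus \<Longrightarrow> pen_crit \<beta> f C y n taus_hat \<le> pen_crit \<beta> f C y n taus"
  shows "\<And>taus. valid_cps n taus \<Longrightarrow>
      real (length taus_hat) * \<beta> * f' (real (length taus_hat)) + seg_cost C y n taus_hat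
      \<le> real (length taus) * \<beta> * f' (real (length taus_hat)) + seg_cost C y n taus"
proof -
  fix taus assume valid: "valid_cps n taus"
  let ?m = "real (length taus)" and ?h = "real (length taus_hat)"
  have "?m \<in> I" "?h \<in> I"
    using valid_cps_length_le[OF valid] valid_cps_length_le[OF assms(7)] assms(4) by auto
  hence "f ?m \<le> f ?h + f' ?h * (?m - ?h)"
    using concave_on_le_tangent[OF assms(5)] assms(6) by blast
  hence "\<beta> * f ?m \<le> \<beta> * (f ?h + f' ?h * (?m - ?h))"
    using assms(2) by (simp add: mult_left_mono)
  moreover have "\<beta> * f ?h + seg_cost C y n taus_hat \<le> \<beta> * f ?m + seg_cost C y n taus"
    using assms(8)[OF valid] by (simp add: pen_crit_def)
  ultimately show "?h * \<beta> * f' ?h + seg_cost C y n taus_hat \<le> ?m * \<beta> * f' ?h + seg_cost C y n taus"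
    by (simp add: algebra_simps)
qed

end
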